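(* Let $(M,F)$ be a $C3$-like Finsler space, i.e. there are covariant vector fields $a_k,b_k$ with $C_{ijk}=h_{ij}a_k+h_{jk}a_i+h_{ki}a_j+C_iC_jb_k+C_jC_kb_i+C_kC_ib_j$, where $a_k=\frac1F\big(I\,m_k+\frac{J}{3}n_k\big)$ with $m_k=C_k/C$, $n_k$ a unit vector orthogonal to $l_k$ and $m_k$, and $I,J$ scalar functions. Suppose $(M,F)$ admits a nonzero semi-concurrent vector field $B^i(x)$. If $J=0$, then $(M,F)$ is Riemannian, i.e. $C_{ijk}=0$.
   Context: $(M,F)$ is a Finsler manifold with metric tensor $g_{ij}=\frac12\dot\partial_i\dot\partial_j F^2$, $l_i=\dot\partial_iF$, angular metric $h_{ij}=g_{ij}-l_il_j$, Cartan tensor $C_{ijk}=\frac12\dot\partial_k g_{ij}$, $C_k=g^{ij}C_{ijk}$, $C^2=g^{ij}C_iC_j$. A vector field $B^i(x)$ on $M$ is semi-concurrent if $B^hC_{hij}=0$. The space is Riemannian if $C_{ijk}\equiv0$. *)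

theory Defs
  imports "HOL-Analysis.Analysis"
begin

text \<open>Local-coordinate model of a Finsler manifold: M is represented by a coordinate
  domain U (open subset of R^n, n = CARD('n)), the tangent bundle by U \<times> R^n,
  F is a function of (x,y).\<close>

definition dirderiv :: "('a::euclidean_space \<Rightarrow> real) \<Rightarrow> 'a \<Rightarrow> 'a \<Rightarrow> real" where
  "dirderiv f v z = deriv (\<lambda>t. f (z + t *\<^sub>R v)) 0"

fun iter_dirderiv :: "'a::euclidean_space list \<Rightarrow> ('a \<Rightarrow> real) \<Rightarrow> 'a \<Rightarrow> real" where
  "iter_dirderiv [] f = f"
| "iter_dirderiv (v # vs) f = dirderiv (iter_dirderiv vs f) v"

definition smooth_on :: "'a::euclidean_space set \<Rightarrow> ('a \<Rightarrow> real) \<Rightarrow> bool" where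
  "smooth_on S f \<longleftrightarrow> open S \<and>
     (\<forall>vs. set vs \<subseteq> Basis \<longrightarrow>
        continuous_on S (iter_dirderiv vs f) \<and>
        (\<forall>z\<in>S. \<forall>v\<in>Basis. (\<lambda>t. iter_dirderiv vs f (z + t *\<^sub>R v)) differentiable (at 0)))"

definition vd :: "'n::finite \<Rightarrow> (real^'n \<Rightarrow> real^'n \<Rightarrow> real) \<Rightarrow> real^'n \<Rightarrow> real^'n \<Rightarrow> real" where
  "vd i f x y = deriv (\<lambda>t. f x (y + t *\<^sub>R axis i 1)) 0"

definition fmetric :: "(real^'n \<Rightarrow> real^'n \<Rightarrow> real) \<Rightarrow> real^'n \<Rightarrow> real^'n \<Rightarrow> 'n::finite \<Rightarrow> 'n \<Rightarrow> real" where
  "fmetric F x y i j = 1/2 * vd i (vd j (\<lambda>x y. (F x y)^2)) x y"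

definition ginv :: "(real^'n \<Rightarrow> real^'n \<Rightarrow> real) \<Rightarrow> real^'n \<Rightarrow> real^'n \<Rightarrow> 'n::finite \<Rightarrow> 'n \<Rightarrow> real" where
  "ginv F x y i j = matrix_inv (\<chi> a b. fmetric F x y a b) $ i $ j"

definition lform :: "(real^'n \<Rightarrow> real^'n \<Rightarrow> real) \<Rightarrow> real^'n \<Rightarrow> real^'n \<Rightarrow> 'n::finite \<Rightarrow> real" where
  "lform F x y i = vd i F x y"

definition hang :: "(real^'n \<Rightarrow> real^'n \<Rightarrow> real) \<Rightarrow> real^'n \<Rightarrow> real^'n \<Rightarrow> 'n::finite \<Rightarrow> 'n \<Rightarrow> real" where
  "hang F x y i j = fmetric F x y i j - lform F x y i * lform F x y j"

definition cartan :: "(real^'n \<Rightarrow> real^'n \<Rightarrow> real) \<Rightarrow> real^'n \<Rightarrow> real^'n \<Rightarrow> 'n::finite \<Rightarrow> 'n \<Rightarrow> 'n \<Rightarrow> real" where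
  "cartan F x y i j k = 1/2 * vd k (\<lambda>x y. fmetric F x y i j) x y"

definition cvec :: "(real^'n \<Rightarrow> real^'n \<Rightarrow> real) \<Rightarrow> real^'n \<Rightarrow> real^'n \<Rightarrow> 'n::finite \<Rightarrow> real" where
  "cvec F x y k = (\<Sum>i\<in>UNIV. \<Sum>j\<in>UNIV. ginv F x y i j * cartan F x y i j k)"

definition csq :: "(real^'n \<Rightarrow> real^'n \<Rightarrow> real) \<Rightarrow> real^'n \<Rightarrow> real^'n \<Rightarrow> real" where
  "csq F x y = (\<Sum>i\<in>(UNIV::'n::finite set). \<Sum>j\<in>UNIV. ginv F x y i j * cvec F x y i * cvec F x y j)"

definition cnorm :: "(real^'n::finite \<Rightarrow> real^'n \<Rightarrow> real) \<Rightarrow> real^'n \<Rightarrow> real^'n \<Rightarrow> real" where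
  "cnorm F x y = sqrt (csq F x y)"

definition cov_inner :: "(real^'n \<Rightarrow> real^'n \<Rightarrow> real) \<Rightarrow> real^'n \<Rightarrow> real^'n \<Rightarrow> ('n::finite \<Rightarrow> real) \<Rightarrow> ('n \<Rightarrow> real) \<Rightarrow> real" where
  "cov_inner F x y u v = (\<Sum>i\<in>UNIV. \<Sum>j\<in>UNIV. ginv F x y i j * u i * v j)"

definition finsler :: "(real^'n::finite) set \<Rightarrow> (real^'n \<Rightarrow> real^'n \<Rightarrow> real) \<Rightarrow> bool" where
  "finsler U F \<longleftrightarrow> open U \<and>
     smooth_on (U \<times> (UNIV - {0})) (\<lambda>(x, y). F x y) \<and>
     (\<forall>x\<in>U. \<forall>y. y \<noteq> 0 \<longrightarrow> F x y > 0) \<and>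
     (\<forall>x\<in>U. \<forall>y. \<forall>t>0. F x (t *\<^sub>R y) = t * F x y) \<and>
     (\<forall>x\<in>U. \<forall>y. y \<noteq> 0 \<longrightarrow>
        (\<forall>v::real^'n. v \<noteq> 0 \<longrightarrow> (\<Sum>i\<in>UNIV. \<Sum>j\<in>UNIV. fmetric F x y i j * v$i * v$j) > 0))"

definition semi_concurrent :: "(real^'n::finite) set \<Rightarrow> (real^'n \<Rightarrow> real^'n \<Rightarrow> real) \<Rightarrow> (real^'n \<Rightarrow> real^'n) \<Rightarrow> bool" where
  "semi_concurrent U F B \<longleftrightarrow>
     (\<forall>x\<in>U. \<forall>y. y \<noteq> 0 \<longrightarrow> (\<forall>i j. (\<Sum>h\<in>UNIV. B x $ h * cartan F x y h i j) = 0))"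

text \<open>C3-like with data a_k, b_k, I, J, n_k: the Cartan tensor decomposition holds, and
  wherever C \<noteq> 0 (so that m_k = C_k/C is defined), a_k = (I m_k + J/3 n_k)/F with n_k a
  unit covector g-orthogonal to l_k and m_k.\<close>
definition C3_like :: "(real^'n::finite) set \<Rightarrow> (real^'n \<Rightarrow> real^'n \<Rightarrow> real)
    \<Rightarrow> (real^'n \<Rightarrow> real^'n \<Rightarrow> 'n \<Rightarrow> real) \<Rightarrow> (real^'n \<Rightarrow> real^'n \<Rightarrow> 'n \<Rightarrow> real)
    \<Rightarrow> (real^'n \<Rightarrow> real^'n \<Rightarrow> real) \<Rightarrow> (real^'n \<Rightarrow> real^'n \<Rightarrow> real)
    \<Rightarrow> (real^'n \<Rightarrow> real^'n \<Rightarrow> 'n \<Rightarrow> real) \<Rightarrow> bool" where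
  "C3_like U F a b I J n \<longleftrightarrow>
     (\<forall>x\<in>U. \<forall>y. y \<noteq> 0 \<longrightarrow>
        (\<forall>i j k. cartan F x y i j k =
            hang F x y i j * a x y k + hang F x y j k * a x y i + hang F x y k i * a x y j
          + cvec F x y i * cvec F x y j * b x y k + cvec F x y j * cvec F x y k * b x y i
          + cvec F x y k * cvec F x y i * b x y j) \<and>
        (cnorm F x y \<noteq> 0 \<longrightarrow>
          (\<forall>k. a x y k = (1 / F x y) * (I x y * (cvec F x y k / cnorm F x y) + J x y / 3 * n x y k)) \<and>
          cov_inner F x y (n x y) (n x y) = 1 \<and>
          cov_inner F x y (n x y) (lform F x y) = 0 \<and>
          cov_inner F x y (n x y) (\<lambda>k. cvec F x y k / cnorm F x y) = 0))"

end

theory Submission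
  imports Defs
begin

text \<open>Fix \<open>x\<close>, put \<open>w = B(x)\<close> and
  \<open>f\<^sub>i = \<partial>\<^sub>i F\<^sup>2\<close>, which is positively homogeneous of degree one in \<open>y\<close> with
  \<open>\<partial>\<^sub>h f\<^sub>i = 2 g\<^sub>h\<^sub>i\<close>. Semi-concurrency says that \<open>\<Sum>\<^sub>h w\<^sup>h g\<^sub>h\<^sub>i\<close> has vanishing
  \<open>y\<close>-gradient, so on the connected punctured space (dimension \<open>\<ge> 2\<close>) the derivative of
  \<open>f\<^sub>i\<close> in direction \<open>w\<close> is a constant. A degree-one homogeneous function with constant
  derivative in direction \<open>w\<close> is linear at every point whose ray in direction \<open>w\<close> (or \<open>-w\<close>)
  misses the origin, and these points cover the punctured space. Hence \<open>g\<^sub>i\<^sub>j\<close> does not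
  depend on \<open>y\<close> and \<open>C\<^sub>i\<^sub>j\<^sub>k = \<partial>\<^sub>k g\<^sub>i\<^sub>j / 2 = 0\<close>. In dimension one the hypothesis
  reduces directly to \<open>B\<^sup>1 C\<^sub>1\<^sub>1\<^sub>1 = 0\<close>.\<close>

lemma mvt_deviation_bound:
  fixes \<phi> \<phi>' :: "real \<Rightarrow> real"
  assumes der: "\<And>t. \<bar>t\<bar> \<le> \<bar>a\<bar> \<Longrightarrow> DERIV \<phi> t :> \<phi>' t"
    and bound: "\<And>t. \<bar>t\<bar> \<le> \<bar>a\<bar> \<Longrightarrow> \<bar>\<phi>' t - c\<bar> \<le> e"
  shows "\<bar>\<phi> a - \<phi> 0 - a * c\<bar> \<le> e * \<bar>a\<bar>"
proof -
  consider "a = 0" | "a > 0" | "a < 0" by linarith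
  then show ?thesis
  proof cases
    case 2
    obtain z where z: "0 < z" "z < a" "\<phi> a - \<phi> 0 = (a - 0) * \<phi>' z"
      using MVT2[of 0 a \<phi> \<phi>'] 2 der by auto
    have "\<bar>\<phi>' z - c\<bar> \<le> e" using bound z by auto
    then have "\<bar>a * (\<phi>' z - c)\<bar> \<le> a * e" using 2 by (simp add: abs_mult)
    then show ?thesis using z 2 by (simp add: algebra_simps)
  next
    case 3
    obtain z where z: "a < z" "z < 0" "\<phi> 0 - \<phi> a = (0 - a) * \<phi>' z"
      using MVT2[of a 0 \<phi> \<phi>'] 3 der by auto
    have "\<bar>\<phi>' z - c\<bar> \<le> e" using bound z by auto
    then have "\<bar>a * (\<phi>' z - c)\<bar> \<le> (-a) * e" using 3 by (simp add: abs_mult)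
    then show ?thesis using z 3 by (simp add: algebra_simps)
  qed simp
qed

lemma coordinatewise_increment_bound:
  fixes f :: "real^'n::finite \<Rightarrow> real" and D :: "'n \<Rightarrow> real^'n \<Rightarrow> real"
  assumes der: "\<And>q i. q \<in> S \<Longrightarrow> ((\<lambda>t. f (q + t *\<^sub>R axis i 1)) has_real_derivative D i q) (at 0)"
    and near: "\<And>q. norm (q - z) \<le> norm h \<Longrightarrow> q \<in> S \<and> (\<forall>i. \<bar>D i q - D i z\<bar> \<le> e)"
    and e: "e \<ge> 0"
  shows "\<bar>f (z + (\<Sum>k\<in>K. h$k *\<^sub>R axis k 1)) - f z - (\<Sum>k\<in>K. h$k * D k z)\<bar>
           \<le> real (card K) * e * norm h"
proof -
  define p where "p K = z + (\<Sum>k\<in>K. h$k *\<^sub>R axis k (1::real))" for K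
  have "finite K" by simp
  then show ?thesis
    unfolding p_def[symmetric]
  proof (induction K rule: finite_induct)
    case empty then show ?case by (simp add: p_def)
  next
    case (insert k K)
    define \<phi> where "\<phi> t = f (p K + t *\<^sub>R axis k 1)" for t
    define \<phi>' where "\<phi>' t = D k (p K + t *\<^sub>R axis k 1)" for t
    have close: "norm (p K + t *\<^sub>R axis k 1 - z) \<le> norm h" if "\<bar>t\<bar> \<le> \<bar>h$k\<bar>" for t
    proof -
      have "p K + t *\<^sub>R axis k 1 - z = (\<Sum>j\<in>K. h$j *\<^sub>R axis j 1) + t *\<^sub>R axis k 1"
        by (simp add: p_def)
      also have "norm \<dots> \<le> norm h"
        using insert.hyps(2) that
        by (intro norm_le_componentwise_cart)
          (auto simp: sum_component axis_def if_distrib cong: if_cong)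
      finally show ?thesis .
    qed
    have "\<bar>\<phi> (h$k) - \<phi> 0 - h$k * D k z\<bar> \<le> e * \<bar>h$k\<bar>"
    proof (rule mvt_deviation_bound)
      fix t assume t: "\<bar>t\<bar> \<le> \<bar>h$k\<bar>"
      have q: "p K + t *\<^sub>R axis k 1 \<in> S" "\<bar>\<phi>' t - D k z\<bar> \<le> e"
        using near[OF close[OF t]] by (auto simp: \<phi>'_def)
      have "((\<lambda>s. f (p K + t *\<^sub>R axis k 1 + s *\<^sub>R axis k 1)) has_real_derivative \<phi>' t) (at 0)"
        using der[OF q(1)] by (simp add: \<phi>'_def)
      then have "((\<lambda>s. \<phi> (s + t)) has_real_derivative \<phi>' t) (at 0)"
        by (simp add: \<phi>_def scaleR_add_left ac_simps)
      then show "DERIV \<phi> t :> \<phi>' t" using DERIV_shift[of \<phi> "\<phi>' t" 0 t] by simp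
      show "\<bar>\<phi>' t - D k z\<bar> \<le> e" by (rule q(2))
    qed
    moreover have "\<phi> (h$k) = f (p (insert k K))" "\<phi> 0 = f (p K)"
      using insert.hyps by (simp_all add: \<phi>_def p_def add.assoc add.commute add.left_commute)
    moreover have "e * \<bar>h$k\<bar> \<le> e * norm h"
      by (rule mult_left_mono[OF component_le_norm_cart e])
    ultimately have step: "\<bar>f (p (insert k K)) - f (p K) - h$k * D k z\<bar> \<le> e * norm h"
      by linarith
    have "f (p (insert k K)) - f z - (\<Sum>j\<in>insert k K. h$j * D j z)
          = (f (p (insert k K)) - f (p K) - h$k * D k z) + (f (p K) - f z - (\<Sum>j\<in>K. h$j * D j z))"
      using insert.hyps by simp
    then have "\<bar>f (p (insert k K)) - f z - (\<Sum>j\<in>insert k K. h$j * D j z)\<bar>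
                 \<le> e * norm h + real (card K) * e * norm h"
      using step insert.IH by linarith
    then show ?case using insert.hyps by (simp add: algebra_simps)
  qed
qed

lemma has_derivative_of_continuous_partials:
  fixes f :: "real^'n::finite \<Rightarrow> real" and D :: "'n \<Rightarrow> real^'n \<Rightarrow> real"
  assumes S: "open S" "z \<in> S"
    and der: "\<And>q i. q \<in> S \<Longrightarrow> ((\<lambda>t. f (q + t *\<^sub>R axis i 1)) has_real_derivative D i q) (at 0)"
    and cont: "\<And>i. continuous_on S (D i)"
  shows "(f has_derivative (\<lambda>h. \<Sum>i\<in>UNIV. h$i * D i z)) (at z)"
  unfolding has_derivative_at_alt
proof (intro conjI allI impI)
  show "bounded_linear (\<lambda>h. \<Sum>i\<in>UNIV. h$i * D i z)"
    by (intro bounded_linear_sum bounded_linear_mult_const bounded_linear_vec_nth)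
next
  fix e :: real assume "e > 0"
  define e' where "e' = e / real CARD('n)"
  have e': "e' > 0" using \<open>e > 0\<close> by (simp add: e'_def)
  have "\<forall>\<^sub>F q in at z. \<forall>i. dist (D i q) (D i z) < e'"
  proof (rule eventually_all_finite)
    fix i
    have "isCont (D i) z" using cont S continuous_on_eq_continuous_at by blast
    then show "\<forall>\<^sub>F q in at z. dist (D i q) (D i z) < e'"
      using e' by (simp add: isCont_def tendstoD)
  qed
  then obtain d1 where d1: "d1 > 0" "\<And>q. q \<noteq> z \<Longrightarrow> dist q z < d1 \<Longrightarrow> \<forall>i. dist (D i q) (D i z) < e'"
    unfolding eventually_at by blast
  obtain d2 where d2: "d2 > 0" "ball z d2 \<subseteq> S" using S open_contains_ball by blast
  show "\<exists>d>0. \<forall>y. norm (y - z) < d \<longrightarrow>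
          norm (f y - f z - (\<Sum>i\<in>UNIV. (y - z)$i * D i z)) \<le> e * norm (y - z)"
  proof (intro exI[of _ "min d1 d2"] conjI allI impI)
    show "min d1 d2 > 0" using d1 d2 by simp
    fix y assume y: "norm (y - z) < min d1 d2"
    have near: "q \<in> S \<and> (\<forall>i. \<bar>D i q - D i z\<bar> \<le> e')" if q: "norm (q - z) \<le> norm (y - z)" for q
    proof
      show "q \<in> S" using q y d2 by (auto simp: dist_norm norm_minus_commute)
      show "\<forall>i. \<bar>D i q - D i z\<bar> \<le> e'"
        using d1(2)[of q] q y e' by (cases "q = z") (auto simp: dist_real_def dist_norm less_imp_le)
    qed
    have "\<bar>f (z + (\<Sum>k\<in>UNIV. (y - z)$k *\<^sub>R axis k 1)) - f z - (\<Sum>k\<in>UNIV. (y - z)$k * D k z)\<bar>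
            \<le> real CARD('n) * e' * norm (y - z)"
      using coordinatewise_increment_bound[where h="y - z" and K=UNIV, OF der near] e' by simp
    moreover have "z + (\<Sum>k\<in>UNIV. (y - z)$k *\<^sub>R axis k 1) = y"
      using basis_expansion[of "y - z"] by (simp add: scalar_mult_eq_scaleR)
    ultimately show "norm (f y - f z - (\<Sum>i\<in>UNIV. (y - z)$i * D i z)) \<le> e * norm (y - z)"
      by (simp add: e'_def)
  qed
qed

lemma constant_on_of_zero_partials:
  fixes \<Phi> :: "real^'n::finite \<Rightarrow> real"
  assumes S: "open S" "connected S" and cont: "continuous_on S \<Phi>"
    and der: "\<And>q i. q \<in> S \<Longrightarrow> ((\<lambda>t. \<Phi> (q + t *\<^sub>R axis i 1)) has_real_derivative 0) (at 0)"
  shows "\<Phi> constant_on S"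
proof (rule has_derivative_zero_connected_constant_on[OF S(2,1) finite.emptyI cont])
  have "(\<Phi> has_derivative (\<lambda>h. \<Sum>i\<in>UNIV. h$i * 0)) (at z)" if "z \<in> S" for z
    using has_derivative_of_continuous_partials[OF S(1) that der] by simp
  then show "\<forall>z\<in>S - {}. (\<Phi> has_derivative (\<lambda>h. 0)) (at z within S)"
    by (simp add: has_derivative_at_withinI)
qed

lemma eventually_line_in_open:
  fixes y v :: "'a::real_normed_vector"
  assumes "open A" "y \<in> A"
  shows "\<forall>\<^sub>F t in nhds (0::real). y + t *\<^sub>R v \<in> A"
proof -
  have "((\<lambda>t::real. y + t *\<^sub>R v) \<longlongrightarrow> y) (at 0)"
    by (auto intro!: tendsto_eq_intros)
  then have "\<forall>\<^sub>F t in at (0::real). y + t *\<^sub>R v \<in> A"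
    using assms topological_tendstoD by blast
  then show ?thesis using assms by (simp add: eventually_nhds_conv_at)
qed

lemma eventually_nonzero_on_line:
  "y \<noteq> 0 \<Longrightarrow> \<forall>\<^sub>F t in nhds 0. y + t *\<^sub>R v \<noteq> (0::real^'n)"
  using eventually_line_in_open[of "-{0}" y v] by auto

lemma has_real_derivative_along_line:
  fixes g :: "real^'n::finite \<Rightarrow> real"
  assumes "(g has_derivative (\<lambda>v. \<Sum>k\<in>UNIV. v$k * Dg k)) (at (y + t *\<^sub>R u))"
  shows "((\<lambda>s. g (y + s *\<^sub>R u)) has_real_derivative (\<Sum>k\<in>UNIV. u$k * Dg k)) (at t)"
proof -
  have "((\<lambda>s. y + s *\<^sub>R u) has_derivative (\<lambda>s. s *\<^sub>R u)) (at t)"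
    by (auto intro!: derivative_eq_intros)
  from has_derivative_compose[OF this assms]
  have "((\<lambda>s. g (y + s *\<^sub>R u)) has_derivative (\<lambda>s. \<Sum>k\<in>UNIV. (s *\<^sub>R u)$k * Dg k)) (at t)"
    by simp
  moreover have "(\<lambda>s. \<Sum>k\<in>UNIV. (s *\<^sub>R u)$k * Dg k) = (*) (\<Sum>k\<in>UNIV. u$k * Dg k)"
    by (auto simp: sum_distrib_left algebra_simps)
  ultimately show ?thesis by (simp add: has_field_derivative_def)
qed

lemma DERIV_eq_slope_of_affine_at_right:
  fixes g :: "real \<Rightarrow> real"
  assumes dg: "DERIV g 0 :> L" and affine: "\<And>s. s > 0 \<Longrightarrow> g s = s * m + c"
  shows "L = m"
proof -
  have ev: "\<forall>\<^sub>F s in at_right 0. g s = s * m + c"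
    using eventually_at_right_less[of "0::real"] by eventually_elim (simp add: affine)
  have "(g \<longlongrightarrow> g 0) (at 0)" using DERIV_continuous[OF dg] by (simp add: isCont_def)
  then have "(g \<longlongrightarrow> g 0) (at_right 0)" by (rule tendsto_within_subset) simp
  then have "((\<lambda>s. s * m + c) \<longlongrightarrow> g 0) (at_right 0)" using tendsto_cong[OF ev] by simp
  moreover have "((\<lambda>s. s * m + c) \<longlongrightarrow> 0 * m + c) (at_right (0::real))" by (intro tendsto_intros)
  ultimately have g0: "g 0 = c" using tendsto_unique trivial_limit_at_right_real by fastforce
  have "((\<lambda>s. (g s - g 0) / (s - 0)) \<longlongrightarrow> L) (at 0)"
    using dg by (simp add: has_field_derivative_iff)
  then have "((\<lambda>s. (g s - g 0) / (s - 0)) \<longlongrightarrow> L) (at_right 0)"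
    by (rule tendsto_within_subset) simp
  moreover have "\<forall>\<^sub>F s in at_right 0. (g s - g 0) / (s - 0) = m"
    using ev eventually_at_right_less[of "0::real"] by eventually_elim (simp add: g0)
  ultimately have "((\<lambda>s. m) \<longlongrightarrow> L) (at_right (0::real))" using tendsto_cong by fastforce
  then show ?thesis using tendsto_unique[OF trivial_limit_at_right_real tendsto_const] by metis
qed

lemma affine_on_ray_of_const_slope:
  fixes f :: "real^'n::finite \<Rightarrow> real" and G :: "'n \<Rightarrow> real^'n \<Rightarrow> real"
  assumes fr: "\<And>q. q \<noteq> 0 \<Longrightarrow> (f has_derivative (\<lambda>v. \<Sum>k\<in>UNIV. v$k * G k q)) (at q)"
    and slope: "\<And>q. q \<noteq> 0 \<Longrightarrow> (\<Sum>k\<in>UNIV. u$k * G k q) = c"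
    and ray: "\<forall>t\<ge>0. y + t *\<^sub>R u \<noteq> 0" and T: "T \<ge> 0"
  shows "f (y + T *\<^sub>R u) = f y + T * c"
proof -
  define g where "g t = f (y + t *\<^sub>R u) - t * c" for t
  have der: "DERIV g t :> 0" if "t \<ge> 0" for t
  proof -
    have q: "y + t *\<^sub>R u \<noteq> 0" using ray that by auto
    have "((\<lambda>s. f (y + s *\<^sub>R u)) has_real_derivative c) (at t)"
      using has_real_derivative_along_line[OF fr[OF q]] slope[OF q] by simp
    then show ?thesis unfolding g_def by (auto intro!: derivative_eq_intros)
  qed
  then have "continuous_on {0..T} g"
    by (meson DERIV_continuous atLeastAtMost_iff continuous_at_imp_continuous_on)
  then have "g T = g 0"
    using T der DERIV_isconst_end[of 0 T g] by (cases "T = 0") auto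
  then show ?thesis by (simp add: g_def)
qed

text \<open>Blowing down along the ray, \<open>f (u + s y) = s f y + c\<close> for \<open>s > 0\<close>; differentiating at
  \<open>s = 0\<close> gives \<open>f y\<close>.\<close>

lemma homogeneous_linear_on_ray:
  fixes f :: "real^'n::finite \<Rightarrow> real" and G :: "'n \<Rightarrow> real^'n \<Rightarrow> real"
  assumes fr: "\<And>q. q \<noteq> 0 \<Longrightarrow> (f has_derivative (\<lambda>v. \<Sum>k\<in>UNIV. v$k * G k q)) (at q)"
    and hom: "\<And>q s. q \<noteq> 0 \<Longrightarrow> s > 0 \<Longrightarrow> f (s *\<^sub>R q) = s * f q"
    and slope: "\<And>q. q \<noteq> 0 \<Longrightarrow> (\<Sum>k\<in>UNIV. u$k * G k q) = c"
    and u: "u \<noteq> 0" and ray: "\<forall>t\<ge>0. y + t *\<^sub>R u \<noteq> 0"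
  shows "f y = (\<Sum>k\<in>UNIV. y$k * G k u)"
proof (rule DERIV_eq_slope_of_affine_at_right[symmetric])
  show "DERIV (\<lambda>s. f (u + s *\<^sub>R y)) 0 :> (\<Sum>k\<in>UNIV. y$k * G k u)"
    using has_real_derivative_along_line[of f "\<lambda>k. G k u" u 0 y] fr[OF u] by simp
  fix s :: real assume s: "s > 0"
  have "u + s *\<^sub>R y = s *\<^sub>R (y + (1/s) *\<^sub>R u)" using s by (simp add: algebra_simps)
  moreover have "y + (1/s) *\<^sub>R u \<noteq> 0" using ray s by auto
  ultimately have "f (u + s *\<^sub>R y) = s * f (y + (1/s) *\<^sub>R u)" using hom s by simp
  also have "\<dots> = s * f y + c"
    using affine_on_ray_of_const_slope[OF fr slope ray, of "1/s"] s by (simp add: algebra_simps)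
  finally show "f (u + s *\<^sub>R y) = s * f y + c" .
qed

lemma homogeneous_partials_eq_on_ray:
  fixes f :: "real^'n::finite \<Rightarrow> real" and G :: "'n \<Rightarrow> real^'n \<Rightarrow> real"
  assumes der: "\<And>q h. q \<noteq> 0 \<Longrightarrow> ((\<lambda>t. f (q + t *\<^sub>R axis h 1)) has_real_derivative G h q) (at 0)"
    and fr: "\<And>q. q \<noteq> 0 \<Longrightarrow> (f has_derivative (\<lambda>v. \<Sum>k\<in>UNIV. v$k * G k q)) (at q)"
    and hom: "\<And>q s. q \<noteq> 0 \<Longrightarrow> s > 0 \<Longrightarrow> f (s *\<^sub>R q) = s * f q"
    and slope: "\<And>q. q \<noteq> 0 \<Longrightarrow> (\<Sum>k\<in>UNIV. u$k * G k q) = c"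
    and u: "u \<noteq> 0" and ray: "\<forall>t\<ge>0. y + t *\<^sub>R u \<noteq> 0"
  shows "G h y = G h u"
proof -
  define A where "A = - ((\<lambda>t::real. t *\<^sub>R (-u)) ` {0..})"
  have memA: "q \<in> A \<longleftrightarrow> (\<forall>t\<ge>0. q + t *\<^sub>R u \<noteq> 0)" for q
  proof -
    have "q + t *\<^sub>R u = 0 \<longleftrightarrow> q = t *\<^sub>R (-u)" for t
      by (auto simp: algebra_simps eq_neg_iff_add_eq_0)
    then show ?thesis unfolding A_def by auto
  qed
  have "closed ((\<lambda>t::real. t *\<^sub>R (-u)) ` {0..})"
  proof (rule closed_injective_linear_image)
    show "linear (\<lambda>t::real. t *\<^sub>R (-u))"
      by (rule bounded_linear.linear[OF bounded_linear_scaleR_left])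
    show "inj (\<lambda>t::real. t *\<^sub>R (-u))" using u by (auto simp: inj_on_def)
  qed simp
  then have "open A" unfolding A_def by (simp add: open_Compl)
  moreover have "y \<in> A" using ray memA by simp
  ultimately have "\<forall>\<^sub>F t in nhds 0. y + t *\<^sub>R axis h 1 \<in> A" by (rule eventually_line_in_open)
  then have linear_near_y:
    "\<forall>\<^sub>F t in nhds 0. f (y + t *\<^sub>R axis h 1) = (\<Sum>k\<in>UNIV. y$k * G k u) + t * G h u"
  proof eventually_elim
    case (elim t)
    then have "f (y + t *\<^sub>R axis h 1) = (\<Sum>k\<in>UNIV. (y + t *\<^sub>R axis h 1)$k * G k u)"
      using homogeneous_linear_on_ray[OF fr hom slope u] memA by blast
    also have "\<dots> = (\<Sum>k\<in>UNIV. y$k * G k u + (if k = h then t * G h u else 0))"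
      by (intro sum.cong) (auto simp: axis_def algebra_simps)
    finally show ?case by (simp add: sum.distrib)
  qed
  have "((\<lambda>t. (\<Sum>k\<in>UNIV. y$k * G k u) + t * G h u) has_real_derivative G h u) (at 0)"
    by (auto intro!: derivative_eq_intros)
  then have "((\<lambda>t. f (y + t *\<^sub>R axis h 1)) has_real_derivative G h u) (at 0)"
    using DERIV_cong_ev[OF refl linear_near_y refl] by simp
  moreover have "y \<noteq> 0" using ray by force
  ultimately show ?thesis using der DERIV_unique by blast
qed

lemma homogeneous_partials_const:
  fixes f :: "real^'n::finite \<Rightarrow> real" and G :: "'n \<Rightarrow> real^'n \<Rightarrow> real"
  assumes n2: "2 \<le> CARD('n)" and w: "w \<noteq> 0"
    and der: "\<And>q h. q \<noteq> 0 \<Longrightarrow> ((\<lambda>t. f (q + t *\<^sub>R axis h 1)) has_real_derivative G h q) (at 0)"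
    and cont: "\<And>h. continuous_on (-{0}) (G h)"
    and hom: "\<And>q s. q \<noteq> 0 \<Longrightarrow> s > 0 \<Longrightarrow> f (s *\<^sub>R q) = s * f q"
    and slope: "\<And>q. q \<noteq> 0 \<Longrightarrow> (\<Sum>h\<in>UNIV. w$h * G h q) = c"
    and y: "y \<noteq> 0"
  shows "G h y = G h w"
proof -
  have fr: "(f has_derivative (\<lambda>v. \<Sum>k\<in>UNIV. v$k * G k q)) (at q)" if "q \<noteq> 0" for q
    using that der cont by (intro has_derivative_of_continuous_partials[where S="-{0}"]) auto
  have along_ray: "G h q = G h u" if u: "u = w \<or> u = -w" and ray: "\<forall>t\<ge>0. q + t *\<^sub>R u \<noteq> 0" for u q
  proof (rule homogeneous_partials_eq_on_ray[OF der fr hom _ _ ray])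
    show "u \<noteq> 0" using u w by auto
    fix q :: "real^'n" assume "q \<noteq> 0"
    then show "(\<Sum>k\<in>UNIV. u$k * G k q) = (if u = w then c else -c)"
      using u slope w by (auto simp: sum_negf)
  qed
  obtain k where k: "w$k \<noteq> 0" using w by (metis vec_eq_iff zero_index)
  have "\<exists>a b :: 'n. a \<noteq> b" using n2 card_le_Suc0_iff_eq[of "UNIV :: 'n set"] by auto
  then obtain k' where k': "k' \<noteq> k" by metis
  \<comment> \<open>a point off the line \<open>\<real> w\<close> links the directions \<open>w\<close> and \<open>-w\<close>\<close>
  have off_line: "axis k' 1 + t *\<^sub>R u \<noteq> 0" if "u = w \<or> u = -w" for t u
  proof
    assume "axis k' 1 + t *\<^sub>R u = 0"
    then have "(axis k' 1 + t *\<^sub>R u)$k = 0" "(axis k' 1 + t *\<^sub>R u)$k' = 0" by simp_all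
    then show False using that k k' by (auto simp: axis_def)
  qed
  have w_minus_w: "G h w = G h (-w)"
    using along_ray[of w "axis k' 1"] along_ray[of "-w" "axis k' 1"] off_line[of w] off_line[of "-w"]
    by (metis (no_types))
  show ?thesis
  proof (cases "\<forall>t\<ge>0. y + t *\<^sub>R w \<noteq> 0")
    case True then show ?thesis using along_ray[of w y] by auto
  next
    case False
    then obtain t where t: "t \<ge> 0" "y + t *\<^sub>R w = 0" by auto
    have "\<forall>s\<ge>0. y + s *\<^sub>R (-w) \<noteq> 0"
    proof (intro allI impI notI)
      fix s :: real assume s: "s \<ge> 0" "y + s *\<^sub>R (-w) = 0"
      then have "(t + s) *\<^sub>R w = 0" using t by (simp add: algebra_simps)
      then show False using t s w y by auto
    qed
    then show ?thesis using along_ray[of "-w" y] w_minus_w by auto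
  qed
qed

lemma partial_of_homogeneous:
  fixes g :: "'a::real_normed_vector \<Rightarrow> real"
  assumes hom: "\<And>q s. s > 0 \<Longrightarrow> g (s *\<^sub>R q) = s * g q"
    and der: "\<And>q. q \<noteq> 0 \<Longrightarrow> ((\<lambda>t. g (q + t *\<^sub>R v)) has_real_derivative D q) (at 0)"
    and q: "q \<noteq> 0" and s: "s > 0"
  shows "D (s *\<^sub>R q) = D q"
proof -
  have rescale: "g (s *\<^sub>R q + t *\<^sub>R v) = s * g (q + (t / s) *\<^sub>R v)" for t
  proof -
    have "s *\<^sub>R q + t *\<^sub>R v = s *\<^sub>R (q + (t / s) *\<^sub>R v)" using s by (simp add: algebra_simps)
    then show ?thesis using hom[OF s] by simp
  qed
  have "DERIV (\<lambda>t. g (q + t *\<^sub>R v)) (0 / s) :> D q" using der[OF q] by simp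
  moreover have "DERIV (\<lambda>t. t / s) 0 :> 1 / s" using s by (auto intro!: derivative_eq_intros)
  ultimately have "((\<lambda>t. s * g (q + (t / s) *\<^sub>R v)) has_real_derivative s * (D q * (1 / s))) (at 0)"
    by (intro DERIV_cmult DERIV_chain2)
  then have "((\<lambda>t. g (s *\<^sub>R q + t *\<^sub>R v)) has_real_derivative D q) (at 0)"
    using s by (simp add: rescale)
  then show ?thesis using der[of "s *\<^sub>R q"] q s DERIV_unique by auto
qed

lemma contraction_eq_0_if_CARD_lt_2:
  fixes B :: "real^'n::finite" and c :: "'n \<Rightarrow> 'n \<Rightarrow> 'n \<Rightarrow> real"
  assumes "CARD('n) < 2" "B \<noteq> 0" "\<And>i j. (\<Sum>h\<in>UNIV. B$h * c h i j) = 0"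
  shows "c i j k = 0"
proof -
  have single: "(UNIV :: 'n set) = {i}"
    using assms(1) card_le_Suc0_iff_eq[of "UNIV :: 'n set"] by auto
  then have "B$i \<noteq> 0" using assms(2) by (metis vec_eq_iff zero_index singletonD UNIV_I)
  moreover have "B$i * c i i i = 0" using assms(3)[of i i] by (simp add: single)
  moreover have "j = i" "k = i" using single by auto
  ultimately show ?thesis by simp
qed

lemma vertical_axes_in_Basis:
  "set (map (\<lambda>a. ((0::real^'n::finite), axis a (1::real))) as) \<subseteq> Basis"
  by (auto simp: Basis_prod_def)

context
  fixes U :: "(real^'n::finite) set" and F :: "real^'n \<Rightarrow> real^'n \<Rightarrow> real" and x :: "real^'n"
  assumes finsler: "finsler U F" and x: "x \<in> U"
begin

text \<open>\<open>vderiv_F [a1, ..., ak] y\<close> is the vertical derivative \<open>\<partial>/\<partial>y\<^sup>a1 ... \<partial>/\<partial>y\<^sup>ak F(x, y)\<close>,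
  written as iterated directional derivatives of \<open>(x, y) \<mapsto> F x y\<close> along the vertical basis
  vectors \<open>(0, e\<^sub>a)\<close>, the form in which \<open>smooth_on\<close> controls them.\<close>

abbreviation vderiv_F :: "'n list \<Rightarrow> real^'n \<Rightarrow> real" where
  "vderiv_F as y \<equiv> iter_dirderiv (map (\<lambda>a. (0, axis a 1)) as) (\<lambda>(p, q). F p q) (x, y)"

lemma vderiv_F_has_derivative:
  assumes "y \<noteq> 0"
  shows "((\<lambda>t. vderiv_F as (y + t *\<^sub>R axis a 1)) has_real_derivative vderiv_F (a # as) y) (at 0)"
proof -
  have "smooth_on (U \<times> (UNIV - {0})) (\<lambda>(p, q). F p q)" using finsler by (simp add: finsler_def)
  moreover have "(x, y) \<in> U \<times> (UNIV - {0})" using x assms by simp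
  moreover have "((0::real^'n), axis a (1::real)) \<in> Basis"
    using vertical_axes_in_Basis[of "[a]"] by simp
  ultimately have "(\<lambda>t. iter_dirderiv (map (\<lambda>a. (0, axis a 1)) as) (\<lambda>(p, q). F p q)
                      ((x, y) + t *\<^sub>R (0, axis a 1))) differentiable (at 0)"
    using vertical_axes_in_Basis unfolding smooth_on_def by blast
  then show ?thesis by (simp add: DERIV_deriv_iff_real_differentiable dirderiv_def)
qed

lemma continuous_on_vderiv_F: "continuous_on (-{0}) (vderiv_F as)"
proof -
  have "continuous_on (U \<times> (UNIV - {0}))
          (iter_dirderiv (map (\<lambda>a. (0, axis a 1)) as) (\<lambda>(p, q). F p q))"
    using finsler vertical_axes_in_Basis[of as] unfolding finsler_def smooth_on_def by blast
  then show ?thesis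
    by (rule continuous_on_compose2) (auto intro!: continuous_intros simp: x)
qed

lemma vd_sq_eq:
  assumes "y \<noteq> 0"
  shows "vd a (\<lambda>p q. (F p q)\<^sup>2) x y = 2 * F x y * vderiv_F [a] y"
proof -
  have "((\<lambda>t. (F x (y + t *\<^sub>R axis a 1))\<^sup>2) has_real_derivative 2 * F x y * vderiv_F [a] y) (at 0)"
    using vderiv_F_has_derivative[OF assms, of "[]" a]
    by (auto intro!: derivative_eq_intros)
  then show ?thesis unfolding vd_def by (rule DERIV_imp_deriv)
qed

lemma vd_sq_has_derivative:
  assumes "y \<noteq> 0"
  shows "((\<lambda>t. vd a (\<lambda>p q. (F p q)\<^sup>2) x (y + t *\<^sub>R axis b 1)) has_real_derivative
            2 * (vderiv_F [b] y * vderiv_F [a] y + F x y * vderiv_F [b, a] y)) (at 0)"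
proof -
  have near_y: "\<forall>\<^sub>F t in nhds 0. vd a (\<lambda>p q. (F p q)\<^sup>2) x (y + t *\<^sub>R axis b 1)
                        = 2 * F x (y + t *\<^sub>R axis b 1) * vderiv_F [a] (y + t *\<^sub>R axis b 1)"
    using eventually_nonzero_on_line[OF assms, of "axis b 1"] by eventually_elim (simp add: vd_sq_eq)
  have "((\<lambda>t. 2 * F x (y + t *\<^sub>R axis b 1) * vderiv_F [a] (y + t *\<^sub>R axis b 1))
      has_real_derivative 2 * (vderiv_F [b] y * vderiv_F [a] y + F x y * vderiv_F [b, a] y)) (at 0)"
    using vderiv_F_has_derivative[OF assms, of "[]" b] vderiv_F_has_derivative[OF assms, of "[a]" b]
    by (auto intro!: derivative_eq_intros simp: algebra_simps)
  then show ?thesis using DERIV_cong_ev[OF refl near_y refl] by simp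
qed

lemma fmetric_eq:
  assumes "y \<noteq> 0"
  shows "fmetric F x y b a = vderiv_F [b] y * vderiv_F [a] y + F x y * vderiv_F [b, a] y"
  unfolding fmetric_def vd_def[of b]
  using DERIV_imp_deriv[OF vd_sq_has_derivative[OF assms]] by simp

lemma continuous_on_fmetric: "continuous_on (-{0}) (\<lambda>y. fmetric F x y b a)"
proof -
  have "continuous_on (-{0})
          (\<lambda>y. vderiv_F [b] y * vderiv_F [a] y + vderiv_F [] y * vderiv_F [b, a] y)"
    by (intro continuous_intros continuous_on_vderiv_F)
  then show ?thesis by (rule continuous_on_cong[THEN iffD1, rotated 2]) (auto simp: fmetric_eq)
qed

lemma fmetric_has_derivative:
  assumes "y \<noteq> 0"
  shows "((\<lambda>t. fmetric F x (y + t *\<^sub>R axis c 1) h a) has_real_derivative 2 * cartan F x y h a c) (at 0)"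
proof -
  define m where "m q = vderiv_F [h] q * vderiv_F [a] q + F x q * vderiv_F [h, a] q" for q
  define D where "D = vderiv_F [c, h] y * vderiv_F [a] y + vderiv_F [h] y * vderiv_F [c, a] y
                      + vderiv_F [c] y * vderiv_F [h, a] y + F x y * vderiv_F [c, h, a] y"
  have "((\<lambda>t. m (y + t *\<^sub>R axis c 1)) has_real_derivative D) (at 0)"
    unfolding m_def D_def
    using vderiv_F_has_derivative[OF assms, of "[]" c] vderiv_F_has_derivative[OF assms, of "[h]" c]
      vderiv_F_has_derivative[OF assms, of "[a]" c] vderiv_F_has_derivative[OF assms, of "[h, a]" c]
    by (auto intro!: derivative_eq_intros)
  moreover have near_y:
    "\<forall>\<^sub>F t in nhds 0. fmetric F x (y + t *\<^sub>R axis c 1) h a = m (y + t *\<^sub>R axis c 1)"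
    using eventually_nonzero_on_line[OF assms, of "axis c 1"] by eventually_elim (simp add: fmetric_eq m_def)
  ultimately have D: "((\<lambda>t. fmetric F x (y + t *\<^sub>R axis c 1) h a) has_real_derivative D) (at 0)"
    using DERIV_cong_ev[OF refl near_y refl] by simp
  moreover have "2 * cartan F x y h a c = D"
    unfolding cartan_def vd_def using DERIV_imp_deriv[OF D] by simp
  ultimately show ?thesis by simp
qed

lemma vd_sq_homogeneous:
  assumes "y \<noteq> 0" "s > 0"
  shows "vd a (\<lambda>p q. (F p q)\<^sup>2) x (s *\<^sub>R y) = s * vd a (\<lambda>p q. (F p q)\<^sup>2) x y"
proof -
  have hom: "F x (s *\<^sub>R q) = s * F x q" if "s > 0" for s q
    using finsler x that by (simp add: finsler_def)
  have "vderiv_F [a] (s *\<^sub>R y) = vderiv_F [a] y"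
    using partial_of_homogeneous[where g="F x" and v="axis a 1", OF hom
        vderiv_F_has_derivative[of _ "[]" a, simplified] assms] by simp
  then show ?thesis using assms by (simp add: vd_sq_eq hom)
qed

lemma fmetric_const_if_semi_concurrent:
  assumes n2: "2 \<le> CARD('n)" and w: "w \<noteq> 0"
    and sc: "\<And>q i j. q \<noteq> 0 \<Longrightarrow> (\<Sum>h\<in>UNIV. w$h * cartan F x q h i j) = 0"
    and y: "y \<noteq> 0"
  shows "fmetric F x y h i = fmetric F x w h i"
proof -
  define \<Phi> where "\<Phi> q = (\<Sum>h\<in>UNIV. w$h * fmetric F x q h i)" for q
  have "\<Phi> constant_on -{0}"
  proof (rule constant_on_of_zero_partials)
    show "connected (-{0::real^'n})"
      using n2 by (intro path_connected_imp_connected path_connected_punctured_universe) simp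
    show "continuous_on (-{0}) \<Phi>"
      unfolding \<Phi>_def by (intro continuous_intros continuous_on_fmetric)
    fix q :: "real^'n" and j assume "q \<in> -{0}"
    then have "((\<lambda>t. \<Phi> (q + t *\<^sub>R axis j 1)) has_real_derivative
                 (\<Sum>h\<in>UNIV. w$h * (2 * cartan F x q h i j))) (at 0)"
      unfolding \<Phi>_def by (intro DERIV_sum DERIV_cmult fmetric_has_derivative) auto
    moreover have "(\<Sum>h\<in>UNIV. w$h * (2 * cartan F x q h i j)) = 0"
      using sc[of q i j] \<open>q \<in> -{0}\<close>
      by (simp add: mult.left_commute[of _ 2] sum_distrib_left[symmetric])
    ultimately show "((\<lambda>t. \<Phi> (q + t *\<^sub>R axis j 1)) has_real_derivative 0) (at 0)" by simp
  qed (simp add: open_Compl)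
  then have slope: "(\<Sum>h\<in>UNIV. w$h * (2 * fmetric F x q h i)) = 2 * \<Phi> w" if "q \<noteq> 0" for q
    using that w unfolding constant_on_def \<Phi>_def
    by (auto simp: mult.left_commute[of _ 2] sum_distrib_left[symmetric])
  have "2 * fmetric F x y h i = 2 * fmetric F x w h i"
  proof (rule homogeneous_partials_const[where f="vd i (\<lambda>p q. (F p q)\<^sup>2) x"
        and G="\<lambda>h q. 2 * fmetric F x q h i", OF n2 w _ _ _ slope y])
    fix q :: "real^'n" and h assume "q \<noteq> 0"
    then show "((\<lambda>t. vd i (\<lambda>p q. (F p q)\<^sup>2) x (q + t *\<^sub>R axis h 1)) has_real_derivative
                 2 * fmetric F x q h i) (at 0)"
      using vd_sq_has_derivative fmetric_eq by simp
  next
    show "continuous_on (-{0}) (\<lambda>q. 2 * fmetric F x q h i)" for h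
      by (intro continuous_intros continuous_on_fmetric)
  next
    show "vd i (\<lambda>p q. (F p q)\<^sup>2) x (s *\<^sub>R q) = s * vd i (\<lambda>p q. (F p q)\<^sup>2) x q"
      if "q \<noteq> 0" "s > 0" for q :: "real^'n" and s
      using that by (rule vd_sq_homogeneous)
  qed
  then show ?thesis by simp
qed

lemma cartan_eq_0_if_semi_concurrent:
  assumes w: "w \<noteq> 0"
    and sc: "\<And>q i j. q \<noteq> 0 \<Longrightarrow> (\<Sum>h\<in>UNIV. w$h * cartan F x q h i j) = 0"
    and y: "y \<noteq> 0"
  shows "cartan F x y i j k = 0"
proof (cases "CARD('n) < 2")
  case True
  then show ?thesis
    using contraction_eq_0_if_CARD_lt_2[OF True w, of "\<lambda>h i j. cartan F x y h i j"] sc[OF y] by simp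
next
  case False
  then have "2 \<le> CARD('n)" by simp
  from fmetric_const_if_semi_concurrent[OF this w sc]
  have "\<forall>\<^sub>F t in nhds 0. fmetric F x (y + t *\<^sub>R axis k 1) i j = fmetric F x w i j"
    using eventually_nonzero_on_line[OF y, of "axis k 1"] by (rule eventually_mono[rotated]) blast
  from DERIV_cong_ev[OF refl this refl]
  have "((\<lambda>t. fmetric F x (y + t *\<^sub>R axis k 1) i j) has_real_derivative 0) (at 0)"
    by simp
  then show ?thesis using fmetric_has_derivative[OF y, of k i j] DERIV_unique by fastforce
qed

end

theorem mainTheorem2:
  fixes U :: "(real^'n::finite) set"
    and F :: "real^'n \<Rightarrow> real^'n \<Rightarrow> real"
    and B :: "real^'n \<Rightarrow> real^'n"
    and a b n :: "real^'n \<Rightarrow> real^'n \<Rightarrow> 'n \<Rightarrow> real"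
    and I J :: "real^'n \<Rightarrow> real^'n \<Rightarrow> real"
  assumes "finsler U F"
    and "C3_like U F a b I J n"
    and "\<forall>i. smooth_on U (\<lambda>x. B x $ i)"
    and "\<forall>x\<in>U. B x \<noteq> 0"
    and "semi_concurrent U F B"
    and "\<forall>x\<in>U. \<forall>y. y \<noteq> 0 \<longrightarrow> J x y = 0"
  shows "\<forall>x\<in>U. \<forall>y. y \<noteq> 0 \<longrightarrow> (\<forall>i j k. cartan F x y i j k = 0)"
proof (intro ballI allI impI)
  fix x y i j k
  assume x: "x \<in> U" and y: "y \<noteq> (0::real^'n)"
  show "cartan F x y i j k = 0"
  proof (rule cartan_eq_0_if_semi_concurrent[OF assms(1) x _ _ y])
    show "B x \<noteq> 0" using assms(4) x by blast
    show "\<And>q i j. q \<noteq> 0 \<Longrightarrow> (\<Sum>h\<in>UNIV. B x $ h * cartan F x q h i j) = 0"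
      using assms(5) x unfolding semi_concurrent_def by blast
  qed
qed

end
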